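(* Let $m\ge 1$ and let $\{S_n\}$ be a $\bmod m$ random walk on $\mathbb{Z}$ with parameters $\mathbf{p}=(p_0,\dots,p_{m-1})$, $\mathbf{q}=(q_0,\dots,q_{m-1})$ satisfying $p_iq_i\neq 0$ for $i=0,1,\dots,m-1$. Let $p^\ast_m$ be the probability that the walk started at $S_0=0$ reaches $m$ before it reaches $-m$. Then \[ p^\ast_m=\frac{p_0p_1\cdots p_{m-1}}{p_0p_1\cdots p_{m-1}+q_0q_1\cdots q_{m-1}}=\frac{\rho_m}{1+\rho_m},\qquad \rho_m:=\frac{p_0p_1\cdots p_{m-1}}{q_0q_1\cdots q_{m-1}} . \]
   Context: A random walk on $\mathbb{Z}$ here is a time-homogeneous Markov chain $\{S_n\}$ on $\mathbb{Z}$ with $S_{n+1}-S_n\in\{-1,0,1\}$ a.s., with $p_j=P(S_{n+1}-S_n=1\mid S_n=j)$, $q_j=P(S_{n+1}-S_n=-1\mid S_n=j)$, $r_j=1-p_j-q_j$. It is a $\bmod m$ random walk (denoted $G(m,\mathbf{p},\mathbf{q})$) if $p_j=p_{j+m}$, $q_j=q_{j+m}$ for all $j\in\mathbb{Z}$. The quantity $p^\ast_m$ is the constant up-step probability of the embedded simple random walk of $\{S_n\}$ on the lattice $m\mathbb{Z}$. *)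

theory Defs
  imports Complex_Main
begin

text \<open>Nearest-neighbour walk on the integers with up-probabilities p j and
down-probabilities q j (holding probability 1 - p j - q j).
hit_before p q a b n j is the probability that the walk started at j
reaches a before it reaches b within at most n steps (a and b absorbing).\<close>

fun hit_before :: "(int \<Rightarrow> real) \<Rightarrow> (int \<Rightarrow> real) \<Rightarrow> int \<Rightarrow> int \<Rightarrow> nat \<Rightarrow> int \<Rightarrow> real" where
  "hit_before p q a b 0 j = (if j = a then 1 else 0)"
| "hit_before p q a b (Suc n) j =
     (if j = a then 1 else if j = b then 0
      else p j * hit_before p q a b n (j + 1)
         + q j * hit_before p q a b n (j - 1)
         + (1 - p j - q j) * hit_before p q a b n j)"

text \<open>Probability of ever reaching a before b, starting from j: the limit of
the finite-horizon probabilities (a nondecreasing bounded sequence).\<close>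

definition hit_prob :: "(int \<Rightarrow> real) \<Rightarrow> (int \<Rightarrow> real) \<Rightarrow> int \<Rightarrow> int \<Rightarrow> int \<Rightarrow> real" where
  "hit_prob p q a b j = lim (\<lambda>n. hit_before p q a b n j)"

definition mod_walk :: "nat \<Rightarrow> (int \<Rightarrow> real) \<Rightarrow> (int \<Rightarrow> real) \<Rightarrow> bool" where
  "mod_walk m p q \<longleftrightarrow> m \<ge> 1 \<and>
     (\<forall>j. p j \<ge> 0 \<and> q j \<ge> 0 \<and> p j + q j \<le> 1) \<and>
     (\<forall>j. p (j + int m) = p j \<and> q (j + int m) = q j)"

end

theory Submission
  imports Defs
begin

text \<open>The absorption probability L j = hit_prob p q m (-m) j satisfies the mean-value
equation p j (L (j+1) - L j) = q j (L j - L (j-1)) strictly between the barriers.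
Chaining this relation over one full period, periodicity makes the increments of L
over [0, m] and over [-m, 0] stand in the ratio q_0 ... q_{m-1} : p_0 ... p_{m-1};
since L m = 1 and L (-m) = 0 this determines L 0.\<close>

lemma hit_before_bounds:
  assumes "\<And>j. p j \<ge> 0 \<and> q j \<ge> 0 \<and> p j + q j \<le> 1"
  shows "0 \<le> hit_before p q a b n j \<and> hit_before p q a b n j \<le> 1"
proof (induction n arbitrary: j)
  case 0
  then show ?case by simp
next
  case (Suc n)
  have coeffs: "p j \<ge> 0" "q j \<ge> 0" "1 - p j - q j \<ge> 0"
    using assms[of j] by auto
  let ?x = "hit_before p q a b n (j + 1)"
    and ?y = "hit_before p q a b n (j - 1)"
    and ?z = "hit_before p q a b n j"
  have "0 \<le> ?x" "?x \<le> 1" "0 \<le> ?y" "?y \<le> 1" "0 \<le> ?z" "?z \<le> 1"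
    using Suc by auto
  with coeffs have "0 \<le> p j * ?x + q j * ?y + (1 - p j - q j) * ?z"
    and "p j * ?x + q j * ?y + (1 - p j - q j) * ?z \<le> p j * 1 + q j * 1 + (1 - p j - q j) * 1"
    by (intro add_nonneg_nonneg mult_nonneg_nonneg add_mono mult_left_mono; simp)+
  then show ?case by auto
qed

lemma hit_before_Suc_ge:
  assumes "\<And>j. p j \<ge> 0 \<and> q j \<ge> 0 \<and> p j + q j \<le> 1"
  shows "hit_before p q a b n j \<le> hit_before p q a b (Suc n) j"
proof (induction n arbitrary: j)
  case 0
  have "0 \<le> hit_before p q a b (Suc 0) j"
    using hit_before_bounds[of p q, OF assms] by blast
  then show ?case
    using assms[of j] by auto
next
  case (Suc n)
  have "p j \<ge> 0" "q j \<ge> 0" "1 - p j - q j \<ge> 0"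
    using assms[of j] by auto
  with Suc.IH have "p j * hit_before p q a b n (j + 1) + q j * hit_before p q a b n (j - 1)
        + (1 - p j - q j) * hit_before p q a b n j
     \<le> p j * hit_before p q a b (Suc n) (j + 1) + q j * hit_before p q a b (Suc n) (j - 1)
        + (1 - p j - q j) * hit_before p q a b (Suc n) j"
    by (intro add_mono mult_left_mono) auto
  then show ?case by (simp only: hit_before.simps) auto
qed

lemma convergent_hit_before:
  assumes "\<And>j. p j \<ge> 0 \<and> q j \<ge> 0 \<and> p j + q j \<le> 1"
  shows "convergent (\<lambda>n. hit_before p q a b n j)"
proof (rule Bseq_mono_convergent)
  show "Bseq (\<lambda>n. hit_before p q a b n j)"
    using hit_before_bounds[of p q, OF assms] by (intro BseqI'[of _ 1]) auto
  have "incseq (\<lambda>n. hit_before p q a b n j)"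
    using hit_before_Suc_ge[of p q, OF assms] by (rule incseq_SucI)
  then show "\<forall>m n. m \<le> n \<longrightarrow> hit_before p q a b m j \<le> hit_before p q a b n j"
    by (auto dest: incseqD)
qed

lemma hit_prob_target: "hit_prob p q a b a = 1"
proof -
  have "hit_before p q a b n a = 1" for n
    by (cases n) auto
  then show ?thesis
    unfolding hit_prob_def by simp
qed

lemma hit_prob_avoid:
  assumes "a \<noteq> b"
  shows "hit_prob p q a b b = 0"
proof -
  have "hit_before p q a b n b = 0" for n
    using assms by (cases n) auto
  then show ?thesis
    unfolding hit_prob_def by simp
qed

lemma hit_prob_mean_value:
  assumes "\<And>j. p j \<ge> 0 \<and> q j \<ge> 0 \<and> p j + q j \<le> 1"
    and "j \<noteq> a" "j \<noteq> b"
  shows "hit_prob p q a b j = p j * hit_prob p q a b (j + 1) + q j * hit_prob p q a b (j - 1)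
           + (1 - p j - q j) * hit_prob p q a b j"
proof -
  have lim: "(\<lambda>n. hit_before p q a b n i) \<longlonglongrightarrow> hit_prob p q a b i" for i
    unfolding hit_prob_def using convergent_hit_before[of p q, OF assms(1)]
    by (rule convergent_LIMSEQ_iff[THEN iffD1])
  have "(\<lambda>n. hit_before p q a b (Suc n) j) = (\<lambda>n. p j * hit_before p q a b n (j + 1)
          + q j * hit_before p q a b n (j - 1) + (1 - p j - q j) * hit_before p q a b n j)"
    using assms(2,3) by simp
  moreover have "\<dots> \<longlonglongrightarrow> p j * hit_prob p q a b (j + 1) + q j * hit_prob p q a b (j - 1)
          + (1 - p j - q j) * hit_prob p q a b j"
    by (intro tendsto_intros lim)
  moreover have "(\<lambda>n. hit_before p q a b (Suc n) j) \<longlonglongrightarrow> hit_prob p q a b j"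
    using lim by (rule LIMSEQ_Suc)
  ultimately show ?thesis
    using LIMSEQ_unique by metis
qed

lemma prod_periodic_window:
  fixes f :: "int \<Rightarrow> 'a :: comm_monoid_mult"
  assumes "\<And>j. f (j + int m) = f j"
  shows "(\<Prod>l<m. f (c + int l)) = (\<Prod>l<m. f (int l))"
proof (cases m)
  case 0
  then show ?thesis by simp
next
  case (Suc n)
  have shift: "(\<Prod>l<m. f (c + 1 + int l)) = (\<Prod>l<m. f (c + int l))" for c
  proof -
    have "(\<Prod>l<m. f (c + 1 + int l)) = (\<Prod>l<n. f (c + 1 + int l)) * f (c + int m)"
      using Suc by (simp add: algebra_simps)
    also have "\<dots> = f c * (\<Prod>l<n. f (c + 1 + int l))"
      using assms[of c] by (simp add: mult.commute)
    also have "\<dots> = (\<Prod>l<m. f (c + int l))"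
      unfolding Suc prod.lessThan_Suc_shift by (simp add: algebra_simps)
    finally show ?thesis .
  qed
  show ?thesis
  proof (induction c rule: int_induct[where k = 0])
    case base
    then show ?case by simp
  next
    case (step1 i)
    then show ?case using shift[of i] by simp
  next
    case (step2 i)
    then show ?case using shift[of "i - 1"] by simp
  qed
qed

lemma increment_product_chain:
  fixes d :: "int \<Rightarrow> 'a :: comm_ring_1"
  assumes "\<And>i. i < k \<Longrightarrow> p (c + 1 + int i) * d (c + 1 + int i) = q (c + 1 + int i) * d (c + int i)"
  shows "d (c + int k) * (\<Prod>i<k. p (c + 1 + int i)) = d c * (\<Prod>i<k. q (c + 1 + int i))"
  using assms
proof (induction k)
  case 0
  then show ?case by simp
next
  case (Suc k)
  let ?t = "c + 1 + int k"
  have "d (c + int (Suc k)) * (\<Prod>i<Suc k. p (c + 1 + int i))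
      = (p ?t * d ?t) * (\<Prod>i<k. p (c + 1 + int i))"
    by (simp add: algebra_simps)
  also have "\<dots> = q ?t * (d (c + int k) * (\<Prod>i<k. p (c + 1 + int i)))"
    using Suc.prems[of k] by (simp add: algebra_simps)
  also have "\<dots> = q ?t * (d c * (\<Prod>i<k. q (c + 1 + int i)))"
    using Suc by simp
  also have "\<dots> = d c * (\<Prod>i<Suc k. q (c + 1 + int i))"
    by (simp add: algebra_simps)
  finally show ?case .
qed

lemma periodic_harmonic_increments:
  fixes L p q :: "int \<Rightarrow> 'a :: comm_ring_1"
  assumes "\<And>j. p (j + int m) = p j" "\<And>j. q (j + int m) = q j"
    and "\<And>j. b < j \<Longrightarrow> j < b + 2 * int m \<Longrightarrow> p j * (L (j + 1) - L j) = q j * (L j - L (j - 1))"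
  shows "(\<Prod>i<m. p (int i)) * (L (b + 2 * int m) - L (b + int m))
       = (\<Prod>i<m. q (int i)) * (L (b + int m) - L b)"
proof -
  define d where "d j = L (j + 1) - L j" for j
  have period: "(\<Prod>i<m. p (int i)) * d (b + int m + int l) = (\<Prod>i<m. q (int i)) * d (b + int l)"
    if "l < m" for l
  proof -
    have "p (b + int l + 1 + int i) * d (b + int l + 1 + int i)
        = q (b + int l + 1 + int i) * d (b + int l + int i)" if "i < m" for i
    proof -
      have "b < b + int l + 1 + int i" "b + int l + 1 + int i < b + 2 * int m"
        using \<open>l < m\<close> that by auto
      from assms(3)[OF this] show ?thesis
        unfolding d_def by (simp add: algebra_simps)
    qed
    then have "d (b + int l + int m) * (\<Prod>i<m. p (b + int l + 1 + int i))
        = d (b + int l) * (\<Prod>i<m. q (b + int l + 1 + int i))"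
      by (rule increment_product_chain)
    moreover have "(\<Prod>i<m. p (b + int l + 1 + int i)) = (\<Prod>i<m. p (int i))"
      and "(\<Prod>i<m. q (b + int l + 1 + int i)) = (\<Prod>i<m. q (int i))"
      using prod_periodic_window[of p m] prod_periodic_window[of q m] assms(1,2) by blast+
    ultimately show ?thesis
      by (simp add: algebra_simps)
  qed
  have telescope: "(\<Sum>l<m. d (c + int l)) = L (c + int m) - L c" for c
    using sum_lessThan_telescope[of "\<lambda>l. L (c + int l)" m]
    unfolding d_def by (simp add: algebra_simps)
  have "(\<Prod>i<m. p (int i)) * (L (b + 2 * int m) - L (b + int m))
      = (\<Prod>i<m. p (int i)) * (\<Sum>l<m. d (b + int m + int l))"
    unfolding telescope by (simp add: algebra_simps)
  also have "\<dots> = (\<Prod>i<m. q (int i)) * (\<Sum>l<m. d (b + int l))"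
    by (simp add: sum_distrib_left period)
  also have "\<dots> = (\<Prod>i<m. q (int i)) * (L (b + int m) - L b)"
    by (simp only: telescope)
  finally show ?thesis .
qed

theorem lemma3p2:
  fixes m :: nat and p q :: "int \<Rightarrow> real"
  assumes "m \<ge> 1"
    and "mod_walk m p q"
    and "\<And>i. i < m \<Longrightarrow> p (int i) * q (int i) \<noteq> 0"
  defines "\<rho> \<equiv> (\<Prod>i<m. p (int i)) / (\<Prod>i<m. q (int i))"
  shows "convergent (\<lambda>n. hit_before p q (int m) (- int m) n 0)
    \<and> hit_prob p q (int m) (- int m) 0
        = (\<Prod>i<m. p (int i)) / ((\<Prod>i<m. p (int i)) + (\<Prod>i<m. q (int i)))
    \<and> hit_prob p q (int m) (- int m) 0 = \<rho> / (1 + \<rho>)"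
proof -
  have stoch: "\<And>j. p j \<ge> 0 \<and> q j \<ge> 0 \<and> p j + q j \<le> 1"
    and per: "\<And>j. p (j + int m) = p j" "\<And>j. q (j + int m) = q j"
    using assms(2) unfolding mod_walk_def by auto
  define L where "L = hit_prob p q (int m) (- int m)"
  define P where "P = (\<Prod>i<m. p (int i))"
  define Q where "Q = (\<Prod>i<m. q (int i))"
  have "p j * (L (j + 1) - L j) = q j * (L j - L (j - 1))" if "- int m < j" "j < int m" for j
    using hit_prob_mean_value[of p q, OF stoch, where a = "int m" and b = "- int m"] that
    unfolding L_def by (simp add: algebra_simps)
  then have "P * (L (int m) - L 0) = Q * (L 0 - L (- int m))"
    using periodic_harmonic_increments[where p = p and q = q and m = m and b = "- int m" and L = L,
        OF per]
    unfolding P_def Q_def by simp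
  moreover have "L (int m) = 1" "L (- int m) = 0"
    using assms(1) hit_prob_target hit_prob_avoid unfolding L_def by auto
  moreover have "P > 0" "Q > 0"
  proof -
    have "p (int i) > 0 \<and> q (int i) > 0" if "i < m" for i
      using stoch[of "int i"] assms(3)[OF that] by (auto simp: less_le)
    then show "P > 0" "Q > 0"
      unfolding P_def Q_def by (auto intro: prod_pos)
  qed
  ultimately have "L 0 = P / (P + Q)" "\<rho> / (1 + \<rho>) = P / (P + Q)"
    unfolding \<rho>_def P_def[symmetric] Q_def[symmetric] by (simp_all add: field_simps)
  then show ?thesis
    using convergent_hit_before[of p q, OF stoch] unfolding L_def P_def Q_def by simp
qed

end
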